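(* There is a function $C_4(t,\epsilon)$ such that the following holds for every positive integer $t$ and every $\epsilon\in(0,1)$: let $G$ be a bipartite graph with $\delta(G)\geq C_4(t,\epsilon)$ which is induced $S_{t,t}$-free. Then for every path $x_1x_2x_3x_4x_5x_6$ of length $5$ in $G$ we have $|S_{N(x_1)}^{N(x_6)}(\epsilon)|\leq C_4(t,\epsilon)$.
   Context: For positive integers $a,b$, the biclaw $S_{a,b}$ is the graph with vertex set $\{x,x_1,\dots,x_a,y,y_1,\dots,y_b\}$ and edges $xy$, $xy_1,\dots,xy_b$, $yx_1,\dots,yx_a$. Induced $S_{t,t}$-free means no induced subgraph isomorphic to $S_{t,t}$. $N(v)$ is the neighbourhood of $v$, $\delta(G)$ the minimum degree. For vertex sets $X,Y$ and $\epsilon\in(0,1)$, $S_X^Y(\epsilon)=\{x\in X : |N(x)\cap Y|\leq (1-\epsilon)|Y|\}$. *)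

theory Defs
  imports Complex_Main
begin

definition graph :: "'a set \<Rightarrow> ('a \<Rightarrow> 'a \<Rightarrow> bool) \<Rightarrow> bool" where
  "graph V E \<longleftrightarrow> finite V \<and> (\<forall>u v. E u v \<longrightarrow> u \<in> V \<and> v \<in> V)
     \<and> (\<forall>u v. E u v \<longrightarrow> E v u) \<and> (\<forall>v. \<not> E v v)"

definition nbhd :: "'a set \<Rightarrow> ('a \<Rightarrow> 'a \<Rightarrow> bool) \<Rightarrow> 'a \<Rightarrow> 'a set" where
  "nbhd V E v = {u \<in> V. E v u}"

definition min_degree_ge :: "'a set \<Rightarrow> ('a \<Rightarrow> 'a \<Rightarrow> bool) \<Rightarrow> real \<Rightarrow> bool" where
  "min_degree_ge V E c \<longleftrightarrow> (\<forall>v\<in>V. real (card (nbhd V E v)) \<ge> c)"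

definition bipartite :: "'a set \<Rightarrow> ('a \<Rightarrow> 'a \<Rightarrow> bool) \<Rightarrow> bool" where
  "bipartite V E \<longleftrightarrow> (\<exists>A B. A \<union> B = V \<and> A \<inter> B = {} \<and>
     (\<forall>u v. E u v \<longrightarrow> (u \<in> A \<and> v \<in> B) \<or> (u \<in> B \<and> v \<in> A)))"

text \<open>Induced copy of the biclaw S_{a,b}: distinct vertices x, x_1..x_a, y, y_1..y_b
whose induced edges are exactly xy, x y_j, y x_i.\<close>
definition induced_biclaw :: "'a set \<Rightarrow> ('a \<Rightarrow> 'a \<Rightarrow> bool) \<Rightarrow> nat \<Rightarrow> nat \<Rightarrow> bool" where
  "induced_biclaw V E a b \<longleftrightarrow> (\<exists>x y (xs :: nat \<Rightarrow> 'a) (ys :: nat \<Rightarrow> 'a).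
     x \<in> V \<and> y \<in> V \<and> xs ` {1..a} \<subseteq> V \<and> ys ` {1..b} \<subseteq> V \<and>
     inj_on xs {1..a} \<and> inj_on ys {1..b} \<and>
     x \<noteq> y \<and> x \<notin> xs ` {1..a} \<and> x \<notin> ys ` {1..b} \<and>
     y \<notin> xs ` {1..a} \<and> y \<notin> ys ` {1..b} \<and> xs ` {1..a} \<inter> ys ` {1..b} = {} \<and>
     E x y \<and> (\<forall>j\<in>{1..b}. E x (ys j)) \<and> (\<forall>i\<in>{1..a}. E y (xs i)) \<and>
     (\<forall>i\<in>{1..a}. \<not> E x (xs i)) \<and> (\<forall>j\<in>{1..b}. \<not> E y (ys j)) \<and>
     (\<forall>i\<in>{1..a}. \<forall>i'\<in>{1..a}. \<not> E (xs i) (xs i')) \<and>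
     (\<forall>j\<in>{1..b}. \<forall>j'\<in>{1..b}. \<not> E (ys j) (ys j')) \<and>
     (\<forall>i\<in>{1..a}. \<forall>j\<in>{1..b}. \<not> E (xs i) (ys j)))"

definition induced_biclaw_free :: "'a set \<Rightarrow> ('a \<Rightarrow> 'a \<Rightarrow> bool) \<Rightarrow> nat \<Rightarrow> bool" where
  "induced_biclaw_free V E t \<longleftrightarrow> \<not> induced_biclaw V E t t"

definition S_set :: "'a set \<Rightarrow> ('a \<Rightarrow> 'a \<Rightarrow> bool) \<Rightarrow> 'a set \<Rightarrow> 'a set \<Rightarrow> real \<Rightarrow> 'a set" where
  "S_set V E X Y \<epsilon> = {x \<in> X. real (card (nbhd V E x \<inter> Y)) \<le> (1 - \<epsilon>) * real (card Y)}"

end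

theory Submission
  imports Defs
begin

(*
  Call (T, W) a large anticomplete pair for (a, c) if T \<subseteq> N(a), W \<subseteq> N(c),
  |T|, |W| \<ge> t^2 and there is no edge between T and W.  If S = S_{N(x1)}^{N(x6)}(eps)
  is large, greedy averaging over N(x6) yields W \<subseteq> N(x6) of size t^2 and T \<subseteq> S of
  size \<ge> t^2 with no edge between them: a pair for (x1, x6).  Such a pair moves along
  edges ab and cd to a pair for (b, d): replace T by the vertices of N(b) with at least
  t neighbours in T, and W likewise.  Fewer than t vertices of N(b) fail this, since t
  of them have at most t(t-1) neighbours in T altogether and would span an induced
  S_{t,t} on the edge ab with the remaining vertices of T; an edge between the new sets
  would span one as well.  Two steps give a pair for the adjacent vertices x3, x4,
  which is itself an induced S_{t,t}.  Bipartiteness enters only through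
  triangle-freeness, which makes all these configurations induced, and the vertices of
  the path need not be distinct.
*)

lemma ex_inj_on_atLeastAtMost_into:
  assumes "finite P" "t \<le> card P"
  obtains f :: "nat \<Rightarrow> 'a" where "inj_on f {1..t}" "f ` {1..t} \<subseteq> P"
proof -
  obtain P0 where P0: "P0 \<subseteq> P" "card P0 = t" "finite P0"
    using obtain_subset_with_card_n assms(2) by metis
  then obtain f where "bij_betw f {1..t} P0"
    using ex_bij_betw_nat_finite_1 by metis
  then show ?thesis
    using that P0 unfolding bij_betw_def by auto
qed

lemma ex_popular_element:
  fixes c :: real
  assumes "finite A" "A \<noteq> {}" "finite S" and many: "\<forall>u\<in>S. c \<le> card {w\<in>A. R u w}"
  shows "\<exists>w\<in>A. c * card S \<le> real (card A) * card {u\<in>S. R u w}"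
proof (rule ccontr)
  assume "\<not> ?thesis"
  then have "\<And>w. w \<in> A \<Longrightarrow> card A * real (card {u\<in>S. R u w}) < c * card S"
    by (simp add: not_le)
  then have "(\<Sum>w\<in>A. card A * real (card {u\<in>S. R u w})) < card A * (c * card S)"
    using assms(1,2) by (intro sum_bounded_above_strict) auto
  then have "card A * (\<Sum>w\<in>A. real (card {u\<in>S. R u w})) < card A * (c * card S)"
    by (simp add: sum_distrib_left)
  then have "(\<Sum>w\<in>A. real (card {u\<in>S. R u w})) < c * card S"
    by (simp add: mult_less_cancel_left)
  also have "c * card S \<le> (\<Sum>u\<in>S. real (card {w\<in>A. R u w}))"
    using sum_bounded_below[of S c "\<lambda>u. real (card {w\<in>A. R u w})"] many
    by (simp add: mult.commute)
  also have "\<dots> = (\<Sum>w\<in>A. real (card {u\<in>S. R u w}))"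
    using sum.swap_restrict[of S A "\<lambda>_ _. 1 :: real" R] assms(1,3) by simp
  finally show False by simp
qed

definition anticomplete :: "('a \<Rightarrow> 'a \<Rightarrow> bool) \<Rightarrow> 'a set \<Rightarrow> 'a set \<Rightarrow> bool" where
  "anticomplete E P Q \<longleftrightarrow> (\<forall>p\<in>P. \<forall>q\<in>Q. \<not> E p q)"

locale simple_graph =
  fixes V :: "'a set" and E :: "'a \<Rightarrow> 'a \<Rightarrow> bool"
  assumes graph: "graph V E"
begin

abbreviation N :: "'a \<Rightarrow> 'a set" where "N \<equiv> nbhd V E"

lemma finite_V: "finite V"
  and edge_in_V: "E u v \<Longrightarrow> u \<in> V \<and> v \<in> V"
  and edge_sym: "E u v \<Longrightarrow> E v u"
  and no_loop: "\<not> E v v"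
  using graph unfolding graph_def by auto

lemma mem_nbhd_iff: "u \<in> N v \<longleftrightarrow> u \<in> V \<and> E v u"
  by (simp add: nbhd_def)

lemma finite_nbhd: "finite (N v)"
  using finite_V by (simp add: nbhd_def)

lemma ex_vertex_with_many_non_nbrs:
  fixes \<epsilon> :: real
  assumes "finite S" "Y \<subseteq> V" "W \<subseteq> Y" "card W < card Y"
    and sparse: "\<forall>u\<in>S. card (N u \<inter> Y) \<le> (1 - \<epsilon>) * card Y"
    and small: "2 * real (card W) \<le> \<epsilon> * card Y"
  shows "\<exists>w\<in>Y - W. \<epsilon> / 2 * card S \<le> card {u\<in>S. \<not> E u w}"
proof -
  have "finite Y"
    using finite_subset[OF assms(2) finite_V] .
  then have "finite W"
    using finite_subset[OF assms(3)] by blast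
  have "card (Y - W) = card Y - card W"
    using card_Diff_subset[OF \<open>finite W\<close> assms(3)] .
  then have "0 < card (Y - W)" "card (Y - W) \<le> card Y"
    using assms(4) by auto
  then have "Y - W \<noteq> {}"
    by (metis card.empty less_irrefl)
  have non_nbrs: "\<epsilon> * card Y / 2 \<le> card {w \<in> Y - W. \<not> E u w}" if "u \<in> S" for u
  proof -
    have "Y \<subseteq> {w \<in> Y - W. \<not> E u w} \<union> (N u \<inter> Y) \<union> W"
      using assms(2) by (auto simp: mem_nbhd_iff)
    then have "card Y \<le> card ({w \<in> Y - W. \<not> E u w} \<union> (N u \<inter> Y) \<union> W)"
      using \<open>finite Y\<close> \<open>finite W\<close> by (intro card_mono) auto
    also have "\<dots> \<le> card {w \<in> Y - W. \<not> E u w} + card (N u \<inter> Y) + card W"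
      using card_Un_le[of "{w \<in> Y - W. \<not> E u w} \<union> (N u \<inter> Y)" W]
        card_Un_le[of "{w \<in> Y - W. \<not> E u w}" "N u \<inter> Y"] by linarith
    finally have "real (card Y) \<le> card {w \<in> Y - W. \<not> E u w} + card (N u \<inter> Y) + card W"
      by (metis of_nat_add of_nat_le_iff)
    moreover have "card (N u \<inter> Y) \<le> card Y - \<epsilon> * card Y"
      using sparse that by (auto simp: left_diff_distrib)
    ultimately show ?thesis
      using small by linarith
  qed
  obtain w where "w \<in> Y - W"
    and popular: "\<epsilon> * card Y / 2 * card S \<le> real (card (Y - W)) * card {u\<in>S. \<not> E u w}"
    using ex_popular_element[of "Y - W" S "\<epsilon> * card Y / 2" "\<lambda>u w. \<not> E u w"]
      non_nbrs \<open>finite Y\<close> \<open>Y - W \<noteq> {}\<close> assms(1) by auto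
  have "card Y * (\<epsilon> / 2 * card S) = \<epsilon> * card Y / 2 * card S"
    by simp
  also have "\<dots> \<le> real (card (Y - W)) * card {u\<in>S. \<not> E u w}"
    by (rule popular)
  also have "\<dots> \<le> real (card Y) * card {u\<in>S. \<not> E u w}"
    using \<open>card (Y - W) \<le> card Y\<close> by (intro mult_right_mono) auto
  finally have "\<epsilon> / 2 * card S \<le> card {u\<in>S. \<not> E u w}"
    using assms(4) by (simp add: mult_le_cancel_left_pos)
  then show ?thesis
    using \<open>w \<in> Y - W\<close> by blast
qed

lemma ex_subset_with_many_common_non_nbrs:
  fixes \<epsilon> :: real
  assumes "finite S" "Y \<subseteq> V" "\<epsilon> \<le> 1"
    and sparse: "\<forall>u\<in>S. card (N u \<inter> Y) \<le> (1 - \<epsilon>) * card Y"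
    and "2 * real k \<le> \<epsilon> * card Y"
  shows "\<exists>W\<subseteq>Y. card W = k \<and> (\<epsilon>/2)^k * card S \<le> card {u\<in>S. \<forall>w\<in>W. \<not> E u w}"
  using assms(5)
proof (induction k)
  case 0
  show ?case
    by (intro exI[of _ "{}"]) auto
next
  case (Suc k)
  then have "2 * real k \<le> \<epsilon> * card Y"
    by simp
  with Suc.IH obtain W where W: "W \<subseteq> Y" "card W = k"
    and IH: "(\<epsilon>/2)^k * card S \<le> card {u\<in>S. \<forall>w\<in>W. \<not> E u w}"
    by auto
  define S' where "S' = {u\<in>S. \<forall>w\<in>W. \<not> E u w}"
  have "finite W" "finite S'" "\<forall>u\<in>S'. card (N u \<inter> Y) \<le> (1 - \<epsilon>) * card Y"
    using finite_subset[OF W(1)] finite_subset[OF assms(2) finite_V] assms(1) sparse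
    unfolding S'_def by auto
  have "0 < \<epsilon> * card Y"
    using Suc.prems of_nat_0_le_iff[of k] by simp
  then have "0 < \<epsilon>"
    by (simp add: zero_less_mult_iff)
  have "real k < card Y"
    using Suc.prems mult_left_le_one_le[of "real (card Y)" \<epsilon>] assms(3) \<open>0 < \<epsilon>\<close> by simp
  then obtain w where w: "w \<in> Y - W" and avoiding_w: "\<epsilon> / 2 * card S' \<le> card {u\<in>S'. \<not> E u w}"
    using ex_vertex_with_many_non_nbrs[OF \<open>finite S'\<close> assms(2) W(1) _ \<open>\<forall>u\<in>S'. _\<close>] W(2)
      \<open>2 * real k \<le> \<epsilon> * card Y\<close> by auto
  have "(\<epsilon>/2)^Suc k * card S \<le> \<epsilon> / 2 * card S'"
    using IH \<open>0 < \<epsilon>\<close> unfolding S'_def by simp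
  also have "\<dots> \<le> card {u\<in>S'. \<not> E u w}"
    by (rule avoiding_w)
  also have "{u\<in>S'. \<not> E u w} = {u\<in>S. \<forall>w'\<in>insert w W. \<not> E u w'}"
    unfolding S'_def by auto
  finally show ?case
    using w W \<open>finite W\<close> by (intro exI[of _ "insert w W"]) auto
qed

end

lemma bipartite_no_triangle: "bipartite V E \<Longrightarrow> E a b \<Longrightarrow> E b c \<Longrightarrow> \<not> E a c"
  unfolding bipartite_def by blast

locale triangle_free_graph = simple_graph +
  assumes no_triangle: "E a b \<Longrightarrow> E b c \<Longrightarrow> \<not> E a c"
begin

lemma induced_biclaw_if_anticomplete:
  assumes xy: "E x y" and P: "P \<subseteq> N y" and Q: "Q \<subseteq> N x" and "0 < t"
    and cP: "t \<le> card P" and cQ: "t \<le> card Q" and PQ: "anticomplete E P Q"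
  shows "induced_biclaw V E t t"
proof -
  have EP: "\<forall>p\<in>P. E y p" "P \<subseteq> V" and EQ: "\<forall>q\<in>Q. E x q" "Q \<subseteq> V"
    using P Q by (auto simp: mem_nbhd_iff)
  obtain p q where "p \<in> P" "q \<in> Q"
    using cP cQ \<open>0 < t\<close> by fastforce
  then have "x \<notin> P" "y \<notin> Q"
    using PQ EP EQ edge_sym unfolding anticomplete_def by blast+
  obtain xs where xs: "inj_on xs {1..t}" "xs ` {1..t} \<subseteq> P"
    using ex_inj_on_atLeastAtMost_into[OF finite_subset[OF P finite_nbhd] cP] .
  obtain ys where ys: "inj_on ys {1..t}" "ys ` {1..t} \<subseteq> Q"
    using ex_inj_on_atLeastAtMost_into[OF finite_subset[OF Q finite_nbhd] cQ] .
  have xs_in: "\<forall>i\<in>{1..t}. xs i \<in> P" and ys_in: "\<forall>j\<in>{1..t}. ys j \<in> Q"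
    using xs ys by auto
  have x_nonadj_P: "\<forall>p\<in>P. \<not> E x p"
    using EP xy no_triangle by blast
  have y_nonadj_Q: "\<forall>q\<in>Q. \<not> E y q"
    using EQ xy no_triangle edge_sym by blast
  have indep: "\<forall>p\<in>P. \<forall>p'\<in>P. \<not> E p p'" "\<forall>q\<in>Q. \<forall>q'\<in>Q. \<not> E q q'"
    using EP EQ no_triangle edge_sym by meson+
  have "P \<inter> Q = {}"
    using x_nonadj_P EQ by blast
  have "x \<noteq> y" "y \<notin> P" "x \<notin> Q"
    using xy EP EQ no_loop by auto
  show ?thesis
    unfolding induced_biclaw_def
    apply (rule exI[of _ x], rule exI[of _ y], rule exI[of _ xs], rule exI[of _ ys])
    using xy edge_in_V[OF xy] xs(1) ys(1) xs_in ys_in EP EQ PQ x_nonadj_P y_nonadj_Q indep \<open>P \<inter> Q = {}\<close>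
      \<open>x \<notin> P\<close> \<open>y \<notin> Q\<close> \<open>x \<noteq> y\<close> \<open>y \<notin> P\<close> \<open>x \<notin> Q\<close>
    unfolding anticomplete_def by (auto simp: image_subset_iff)
qed

end

(* The first term makes (eps/2)^(t^2) |S| \<ge> t^2, the second lets t^2 vertices of N(x6)
   be chosen greedily, and the last two are the degree needed to move a pair along. *)
definition biclaw_bound :: "nat \<Rightarrow> real \<Rightarrow> real" where
  "biclaw_bound t \<epsilon> = real t^2 * (2/\<epsilon>)^(t^2) + 2 * real t^2 / \<epsilon> + real t^2 + real t"

locale biclaw_free_triangle_free_graph = triangle_free_graph +
  fixes t :: nat
  assumes t_pos: "0 < t" and biclaw_free: "\<not> induced_biclaw V E t t"
begin

lemma small_if_anticomplete:
  assumes "E x y" "P \<subseteq> N y" "Q \<subseteq> N x" "anticomplete E P Q"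
  shows "card P < t \<or> card Q < t"
  using induced_biclaw_if_anticomplete[OF assms(1-3) t_pos _ _ assms(4)] biclaw_free
  by linarith

definition heavy :: "'a set \<Rightarrow> 'a set \<Rightarrow> 'a set" where
  "heavy X T = {z \<in> X. t \<le> card (N z \<inter> T)}"

lemma anticomplete_heavy:
  assumes "anticomplete E T W"
  shows "anticomplete E (heavy X T) (heavy Y W)"
  unfolding anticomplete_def
proof (intro ballI notI)
  fix p q
  assume "p \<in> heavy X T" "q \<in> heavy Y W" "E p q"
  moreover have "anticomplete E (N p \<inter> T) (N q \<inter> W)"
    using assms unfolding anticomplete_def by blast
  ultimately show False
    using small_if_anticomplete[of q p "N p \<inter> T" "N q \<inter> W"] edge_sym
    by (auto simp: heavy_def)
qed

lemma card_light_lt: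
  assumes "E a b" "T \<subseteq> N a" "t^2 \<le> card T"
  shows "card (N b - heavy (N b) T) < t"
proof (rule ccontr)
  assume "\<not> ?thesis"
  then obtain Z where Z: "Z \<subseteq> N b - heavy (N b) T" "card Z = t" "finite Z"
    by (meson not_less obtain_subset_with_card_n)
  define U where "U = (\<Union>z\<in>Z. N z \<inter> T)"
  have "card U \<le> (\<Sum>z\<in>Z. card (N z \<inter> T))"
    unfolding U_def using Z(3) by (rule card_UN_le)
  also have "\<dots> \<le> card Z * (t - 1)"
    using sum_bounded_above[of Z "\<lambda>z. card (N z \<inter> T)" "t - 1"] Z(1)
    by (fastforce simp: heavy_def)
  finally have "card U \<le> t * (t - 1)"
    using Z(2) by simp
  moreover have "card (T - U) = card T - card U"
    using finite_subset[OF assms(2) finite_nbhd] by (intro card_Diff_subset) (auto simp: U_def)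
  moreover have "t^2 = t * (t - 1) + t"
    using t_pos by (cases t) (auto simp: power2_eq_square)
  ultimately have "t \<le> card (T - U)"
    using assms(3) by linarith
  moreover have "T \<subseteq> V"
    using assms(2) by (auto simp: mem_nbhd_iff)
  then have "anticomplete E Z (T - U)"
    unfolding anticomplete_def U_def by (auto simp: mem_nbhd_iff)
  ultimately show False
    using small_if_anticomplete[OF assms(1), of Z "T - U"] Z assms(2) by auto
qed

lemma card_nbhd_le_card_heavy:
  assumes "E a b" "T \<subseteq> N a" "t^2 \<le> card T"
  shows "card (N b) \<le> card (heavy (N b) T) + t"
proof -
  have "card (N b - heavy (N b) T) = card (N b) - card (heavy (N b) T)"
    using finite_nbhd by (intro card_Diff_subset) (auto simp: heavy_def)
  then show ?thesis
    using card_light_lt[OF assms] by linarith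
qed

definition large_anticomplete_in_nbhds :: "'a \<Rightarrow> 'a \<Rightarrow> bool" where
  "large_anticomplete_in_nbhds a c \<longleftrightarrow>
     (\<exists>T W. T \<subseteq> N a \<and> W \<subseteq> N c \<and> t^2 \<le> card T \<and> t^2 \<le> card W \<and> anticomplete E T W)"

lemma large_anticomplete_in_nbhdsI:
  assumes "T \<subseteq> N a" "W \<subseteq> N c" "t^2 \<le> card T" "t^2 \<le> card W" "anticomplete E T W"
  shows "large_anticomplete_in_nbhds a c"
  using assms unfolding large_anticomplete_in_nbhds_def by blast

lemma large_anticomplete_in_nbhds_step:
  assumes "large_anticomplete_in_nbhds a c" "E a b" "E c d"
    and "t^2 + t \<le> card (N b)" "t^2 + t \<le> card (N d)"
  shows "large_anticomplete_in_nbhds b d"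
proof -
  obtain T W where TW: "T \<subseteq> N a" "W \<subseteq> N c" "t^2 \<le> card T" "t^2 \<le> card W" "anticomplete E T W"
    using assms(1) unfolding large_anticomplete_in_nbhds_def by blast
  have "heavy (N b) T \<subseteq> N b" "heavy (N d) W \<subseteq> N d"
    by (auto simp: heavy_def)
  moreover have "t^2 \<le> card (heavy (N b) T)" "t^2 \<le> card (heavy (N d) W)"
    using card_nbhd_le_card_heavy[OF assms(2) TW(1,3)] card_nbhd_le_card_heavy[OF assms(3) TW(2,4)]
      assms(4,5) by linarith+
  moreover have "anticomplete E (heavy (N b) T) (heavy (N d) W)"
    using anticomplete_heavy[OF TW(5)] .
  ultimately show ?thesis
    by (intro large_anticomplete_in_nbhdsI)
qed

lemma not_large_anticomplete_in_nbhds_if_edge: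
  assumes "E a c"
  shows "\<not> large_anticomplete_in_nbhds a c"
proof
  assume "large_anticomplete_in_nbhds a c"
  then obtain T W where TW: "T \<subseteq> N a" "W \<subseteq> N c" "t^2 \<le> card T" "t^2 \<le> card W" "anticomplete E T W"
    unfolding large_anticomplete_in_nbhds_def by blast
  moreover have "t \<le> t^2"
    by (simp add: power2_eq_square)
  ultimately show False
    using small_if_anticomplete[OF edge_sym[OF assms] TW(1,2,5)] by linarith
qed

lemma large_anticomplete_in_nbhds_if_card_S_set:
  fixes \<epsilon> :: real
  assumes "0 < \<epsilon>" "\<epsilon> \<le> 1" "2 * real t^2 \<le> \<epsilon> * card (N y)"
    and many: "real t^2 * (2/\<epsilon>)^(t^2) \<le> card (S_set V E (N x) (N y) \<epsilon>)"
  shows "large_anticomplete_in_nbhds x y"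
proof -
  let ?S = "S_set V E (N x) (N y) \<epsilon>"
  have "finite ?S"
    using finite_nbhd by (simp add: S_set_def)
  then obtain W where W: "W \<subseteq> N y" "card W = t^2"
    and avoided: "(\<epsilon>/2)^(t^2) * card ?S \<le> card {u\<in>?S. \<forall>w\<in>W. \<not> E u w}"
    using ex_subset_with_many_common_non_nbrs[of ?S "N y" \<epsilon> "t^2"] assms(2,3)
    by (auto simp: S_set_def nbhd_def)
  define T where "T = {u\<in>?S. \<forall>w\<in>W. \<not> E u w}"
  have "real t^2 = (\<epsilon>/2)^(t^2) * (real t^2 * (2/\<epsilon>)^(t^2))"
    using \<open>0 < \<epsilon>\<close> by (simp add: power_mult_distrib[symmetric])
  also have "\<dots> \<le> (\<epsilon>/2)^(t^2) * card ?S"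
    using many \<open>0 < \<epsilon>\<close> by (intro mult_left_mono) auto
  finally have "real t^2 \<le> card T"
    using avoided unfolding T_def by linarith
  then have "t^2 \<le> card T"
    by (simp only: of_nat_power[symmetric] of_nat_le_iff)
  moreover have "T \<subseteq> N x" "anticomplete E T W"
    by (auto simp: T_def S_set_def anticomplete_def)
  ultimately show ?thesis
    using W by (intro large_anticomplete_in_nbhdsI[of T x W y]) auto
qed

lemma card_S_set_le_biclaw_bound:
  fixes \<epsilon> :: real
  assumes "0 < \<epsilon>" "\<epsilon> \<le> 1" "min_degree_ge V E (biclaw_bound t \<epsilon>)"
    and "E x1 x2" "E x2 x3" "E x3 x4" "E x4 x5" "E x5 x6"
  shows "card (S_set V E (N x1) (N x6) \<epsilon>) \<le> biclaw_bound t \<epsilon>"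
proof (rule ccontr)
  assume too_many: "\<not> ?thesis"
  have nonneg: "0 \<le> real t^2 * (2/\<epsilon>)^(t^2)" "0 \<le> 2 * real t^2 / \<epsilon>" "0 \<le> real t^2 + real t"
    using \<open>0 < \<epsilon>\<close> by auto
  have deg: "biclaw_bound t \<epsilon> \<le> card (N v)" if "v \<in> V" for v
    using assms(3) that unfolding min_degree_ge_def by blast
  have deg_nat: "t^2 + t \<le> card (N v)" if "v \<in> V" for v
  proof -
    have "real (t^2 + t) \<le> card (N v)"
      using deg[OF that] nonneg unfolding biclaw_bound_def by simp
    then show ?thesis
      by (simp only: of_nat_le_iff)
  qed
  have "x2 \<in> V" "x3 \<in> V" "x4 \<in> V" "x5 \<in> V" "x6 \<in> V"
    using edge_in_V assms(5,6,8) by blast+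
  have "2 * real t^2 / \<epsilon> \<le> card (N x6)"
    using deg[OF \<open>x6 \<in> V\<close>] nonneg unfolding biclaw_bound_def by linarith
  then have "2 * real t^2 \<le> \<epsilon> * card (N x6)"
    using \<open>0 < \<epsilon>\<close> by (simp add: divide_le_eq mult.commute)
  moreover have "real t^2 * (2/\<epsilon>)^(t^2) \<le> card (S_set V E (N x1) (N x6) \<epsilon>)"
    using too_many nonneg unfolding biclaw_bound_def by linarith
  ultimately have "large_anticomplete_in_nbhds x1 x6"
    using large_anticomplete_in_nbhds_if_card_S_set assms(1,2) by blast
  then have "large_anticomplete_in_nbhds x2 x5"
    using large_anticomplete_in_nbhds_step[OF _ assms(4) edge_sym[OF assms(8)]]
      deg_nat[OF \<open>x2 \<in> V\<close>] deg_nat[OF \<open>x5 \<in> V\<close>] by blast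
  then have "large_anticomplete_in_nbhds x3 x4"
    using large_anticomplete_in_nbhds_step[OF _ assms(5) edge_sym[OF assms(7)]]
      deg_nat[OF \<open>x3 \<in> V\<close>] deg_nat[OF \<open>x4 \<in> V\<close>] by blast
  then show False
    using not_large_anticomplete_in_nbhds_if_edge assms(6) by blast
qed

end

theorem mainTheorem7:
  "\<exists>C :: nat \<Rightarrow> real \<Rightarrow> real. \<forall>t::nat. \<forall>\<epsilon>::real. \<forall>(V::nat set) E.
     0 < t \<longrightarrow> 0 < \<epsilon> \<longrightarrow> \<epsilon> < 1 \<longrightarrow>
     graph V E \<longrightarrow> bipartite V E \<longrightarrow> min_degree_ge V E (C t \<epsilon>) \<longrightarrow>
     induced_biclaw_free V E t \<longrightarrow>
     (\<forall>x1 x2 x3 x4 x5 x6. distinct [x1, x2, x3, x4, x5, x6] \<longrightarrow>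
        E x1 x2 \<longrightarrow> E x2 x3 \<longrightarrow> E x3 x4 \<longrightarrow> E x4 x5 \<longrightarrow> E x5 x6 \<longrightarrow>
        real (card (S_set V E (nbhd V E x1) (nbhd V E x6) \<epsilon>)) \<le> C t \<epsilon>)"
proof (intro exI[of _ biclaw_bound] allI impI)
  fix t :: nat and \<epsilon> :: real and V :: "nat set" and E x1 x2 x3 x4 x5 x6
  assume "0 < t" "0 < \<epsilon>" "\<epsilon> < 1" "graph V E" "bipartite V E"
    and deg: "min_degree_ge V E (biclaw_bound t \<epsilon>)" and "induced_biclaw_free V E t"
    and "distinct [x1, x2, x3, x4, x5, x6]"
    and walk: "E x1 x2" "E x2 x3" "E x3 x4" "E x4 x5" "E x5 x6"
  interpret biclaw_free_triangle_free_graph V E t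
    using \<open>0 < t\<close> \<open>graph V E\<close> bipartite_no_triangle[OF \<open>bipartite V E\<close>]
      \<open>induced_biclaw_free V E t\<close>
    by unfold_locales (auto simp: induced_biclaw_free_def)
  show "card (S_set V E (nbhd V E x1) (nbhd V E x6) \<epsilon>) \<le> biclaw_bound t \<epsilon>"
    using card_S_set_le_biclaw_bound[OF \<open>0 < \<epsilon>\<close> _ deg walk] \<open>\<epsilon> < 1\<close> by simp
qed

end
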